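(* Let $A$ be a finite abelian group, let $H$ be a subgroup of $A$, let $A_2$ be the Sylow $2$-subgroup of $A$ and $H_2$ the Sylow $2$-subgroup of $H$, and suppose $|H_2|\neq 2$. Then $\Gamma_{A_2,H_2}$ admits a perfect code if and only if $\Gamma_{A,H}$ admits a perfect code.
   Context: Abelian groups are written additively with identity $0$. For a subgroup $H$ of a finite abelian group $A$, the subgroup sum graph $\Gamma_{A,H}$ is the simple undirected graph with vertex set $A$ in which distinct vertices $x,y$ are adjacent if and only if $x+y\in H\setminus\{0\}$. A perfect code in a graph is a set $C$ of vertices that is independent and such that every vertex not in $C$ is adjacent to exactly one vertex of $C$. *)

theory Defs
  imports Main
begin

definition subgrp :: "'a::ab_group_add set \<Rightarrow> bool" where
  "subgrp H \<longleftrightarrow> 0 \<in> H \<and> (\<forall>x\<in>H. \<forall>y\<in>H. x + y \<in> H) \<and> (\<forall>x\<in>H. - x \<in> H)"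

definition sylow2_subgroup :: "'a::ab_group_add set \<Rightarrow> 'a set \<Rightarrow> bool" where
  "sylow2_subgroup S P \<longleftrightarrow> subgrp P \<and> P \<subseteq> S \<and>
     (\<exists>k::nat. card P = 2 ^ k \<and> \<not> (2::nat) ^ Suc k dvd card S)"

definition sum_adj :: "'a::ab_group_add set \<Rightarrow> 'a set \<Rightarrow> 'a \<Rightarrow> 'a \<Rightarrow> bool" where
  "sum_adj V H x y \<longleftrightarrow> x \<in> V \<and> y \<in> V \<and> x \<noteq> y \<and> x + y \<in> H - {0}"

definition perfect_code :: "'a::ab_group_add set \<Rightarrow> 'a set \<Rightarrow> 'a set \<Rightarrow> bool" where
  "perfect_code V H C \<longleftrightarrow> C \<subseteq> V \<and>
     (\<forall>x\<in>C. \<forall>y\<in>C. \<not> sum_adj V H x y) \<and>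
     (\<forall>v\<in>V - C. \<exists>!c. c \<in> C \<and> sum_adj V H v c)"

definition has_perfect_code :: "'a::ab_group_add set \<Rightarrow> 'a set \<Rightarrow> bool" where
  "has_perfect_code V H \<longleftrightarrow> (\<exists>C. perfect_code V H C)"

end

theory Submission
  imports Defs "HOL-Algebra.Multiplicative_Group"
begin

text \<open>The graph splits into the blocks \<open>\<plusminus>a + H\<close>. A block with \<open>2a \<notin> H\<close> is a complete
  bipartite graph minus a perfect matching and always has the perfect code \<open>{a, -a}\<close>; a block
  \<open>a + H\<close> with \<open>2a \<in> H\<close> is a complete graph minus the matching \<open>x \<leftrightarrow> -x\<close>, which has a perfect
  code iff it contains an element \<open>t\<close> with \<open>2t = 0\<close>, provided \<open>|H| \<noteq> 2\<close>. So \<open>\<Gamma>\<^sub>A\<^sub>,\<^sub>H\<close> has a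
  perfect code iff every coset \<open>a + H\<close> with \<open>2a \<in> H\<close> contains such a \<open>t\<close>. Writing
  \<open>a = a\<^sub>2 + a'\<close> with \<open>a\<^sub>2\<close> in the Sylow 2-subgroup and \<open>a'\<close> of odd order, the odd part \<open>a'\<close>
  lies in \<open>H\<close> as soon as \<open>2a' \<in> H\<close>, and \<open>H\<^sub>2 = H \<inter> A\<^sub>2\<close>; hence this coset condition for
  \<open>(A, H)\<close> is equivalent to the one for \<open>(A\<^sub>2, H\<^sub>2)\<close>.\<close>

fun nsmul :: "nat \<Rightarrow> 'a::ab_group_add \<Rightarrow> 'a" where
  "nsmul 0 x = 0"
| "nsmul (Suc n) x = x + nsmul n x"

lemma nsmul_add: "nsmul (m + n) x = nsmul m x + nsmul n x"
  by (induction m) (auto simp: add.assoc)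

lemma nsmul_mult: "nsmul (m * n) x = nsmul m (nsmul n x)"
  by (induction m) (auto simp: nsmul_add)

lemma nsmul_add_right: "nsmul n (x + y) = nsmul n x + nsmul n y"
  by (induction n) (auto simp: algebra_simps)

lemma nsmul_minus: "nsmul n (- x) = - nsmul n x"
  by (induction n) (auto simp: algebra_simps)

lemma nsmul_diff_right: "nsmul n (x - y) = nsmul n x - nsmul n y"
  using nsmul_add_right[of n x "- y"] by (simp add: nsmul_minus)

lemma nsmul_zero_right [simp]: "nsmul n 0 = 0"
  by (induction n) auto

lemma nsmul_one [simp]: "nsmul 1 x = x"
  by simp

lemma nsmul_mult_add_eq: "nsmul n x = 0 \<Longrightarrow> nsmul (c * n + b) x = nsmul b x"
  by (simp add: nsmul_add nsmul_mult)

lemma subgrp_zero: "subgrp W \<Longrightarrow> 0 \<in> W"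
  and subgrp_add: "subgrp W \<Longrightarrow> x \<in> W \<Longrightarrow> y \<in> W \<Longrightarrow> x + y \<in> W"
  and subgrp_minus: "subgrp W \<Longrightarrow> x \<in> W \<Longrightarrow> - x \<in> W"
  by (auto simp: subgrp_def)

lemma subgrp_diff: "subgrp W \<Longrightarrow> x \<in> W \<Longrightarrow> y \<in> W \<Longrightarrow> x - y \<in> W"
  using subgrp_add[of W x "- y"] subgrp_minus[of W y] by simp

lemma subgrp_UNIV: "subgrp UNIV"
  by (simp add: subgrp_def)

lemma subgrp_nsmul: "subgrp W \<Longrightarrow> x \<in> W \<Longrightarrow> nsmul n x \<in> W"
  by (induction n) (auto simp: subgrp_zero subgrp_add)

lemma subgrp_mem_if_odd_torsion:
  assumes "subgrp W" "odd m" "nsmul m z = 0" "z + z \<in> W"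
  shows "z \<in> W"
proof -
  obtain q where "m = Suc (2 * q)"
    using \<open>odd m\<close> by (metis oddE Suc_eq_plus1)
  then have "z + nsmul q (z + z) = 0"
    using \<open>nsmul m z = 0\<close> by (simp add: nsmul_add_right nsmul_add mult_2)
  then have "z = - nsmul q (z + z)"
    by (simp add: eq_neg_iff_add_eq_0)
  then show ?thesis
    using assms(1,4) by (metis subgrp_minus subgrp_nsmul)
qed

text \<open>A subgroup viewed as a HOL-Algebra group, for Lagrange's theorem and quotient groups.\<close>

definition grp :: "'a::ab_group_add set \<Rightarrow> 'a monoid" where
  "grp S = \<lparr>carrier = S, mult = (+), one = 0\<rparr>"

lemma grp_simps [simp]: "carrier (grp S) = S" "mult (grp S) = (+)" "one (grp S) = 0"
  by (auto simp: grp_def)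

lemma comm_group_grp: "subgrp S \<Longrightarrow> comm_group (grp S)"
  by (rule comm_groupI)
    (auto simp: subgrp_def add.assoc add.commute, metis add.commute ab_left_minus)

lemma grp_nat_pow [simp]: "x [^]\<^bsub>grp S\<^esub> n = nsmul n x"
  by (induction n) (auto simp: add.commute)

lemma subgroup_grp: "subgrp P \<Longrightarrow> P \<subseteq> S \<Longrightarrow> subgrp S \<Longrightarrow> subgroup P (grp S)"
proof -
  assume P: "subgrp P" "P \<subseteq> S" and S: "subgrp S"
  interpret comm_group "grp S" using comm_group_grp[OF S] .
  have "inv\<^bsub>grp S\<^esub> x = - x" if "x \<in> S" for x
    using S that by (intro inv_equality) (auto simp: subgrp_def)
  then show ?thesis
    using P by (intro subgroup.intro) (auto simp: subgrp_def subset_iff)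
qed

lemma nsmul_card_eq_0:
  assumes "subgrp S" "x \<in> S"
  shows "nsmul (card S) x = 0"
proof -
  interpret comm_group "grp S" using comm_group_grp[OF assms(1)] .
  show ?thesis
    using pow_order_eq_1[of x] assms(2) by (simp add: order_def)
qed

lemma nsmul_index_mem:
  assumes S: "subgrp S" and P: "subgrp P" "P \<subseteq> S" and x: "x \<in> S"
  shows "nsmul (card (rcosets\<^bsub>grp S\<^esub> P)) x \<in> P"
proof -
  interpret comm_group "grp S" using comm_group_grp[OF S] .
  have sg: "subgroup P (grp S)" using subgroup_grp[OF P S] .
  have nrm: "normal P (grp S)" using subgroup_imp_normal[OF sg] .
  interpret Q: group "grp S Mod P" using normal.factorgroup_is_group[OF nrm] .
  have rcos_pow: "(P #>\<^bsub>grp S\<^esub> x) [^]\<^bsub>grp S Mod P\<^esub> n = P #>\<^bsub>grp S\<^esub> nsmul n x" for n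
  proof (induction n)
    case 0
    then show ?case
      using subgroup.rcos_const[OF sg is_group] subgroup.one_closed[OF sg] by simp
  next
    case (Suc n)
    then show ?case
      using normal.rcos_sum[OF nrm, of "nsmul n x" x] x subgrp_nsmul[OF S x, of n]
      by (simp add: add.commute)
  qed
  have "P #>\<^bsub>grp S\<^esub> x \<in> carrier (grp S Mod P)"
    using x by (auto simp: FactGroup_def RCOSETS_def)
  then have "(P #>\<^bsub>grp S\<^esub> x) [^]\<^bsub>grp S Mod P\<^esub> card (rcosets\<^bsub>grp S\<^esub> P) = P"
    using Q.pow_order_eq_1 by (simp add: order_def FactGroup_def)
  then have "P #>\<^bsub>grp S\<^esub> nsmul (card (rcosets\<^bsub>grp S\<^esub> P)) x = P"
    by (simp add: rcos_pow)
  then show ?thesis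
    using rcos_self[OF _ sg] subgrp_nsmul[OF S x] by (metis grp_simps(1))
qed

subsection \<open>Sylow 2-subgroups\<close>

lemma bezout_odd_pow2:
  assumes "odd (r::nat)"
  obtains u v where "r * u = v * 2 ^ k + 1"
proof -
  have "gcd r (2 ^ k) = 1" using assms by simp
  then show ?thesis
    using bezout_nat[of r "2 ^ k"] assms that by (metis mult.commute odd_pos not_gr0)
qed

lemma sylow2_index:
  fixes S :: "'a::{ab_group_add,finite} set"
  assumes S: "subgrp S" and syl: "sylow2_subgroup S P"
  obtains k r where "card P = 2 ^ k" "card S = 2 ^ k * r" "odd r" "\<And>x. x \<in> S \<Longrightarrow> nsmul r x \<in> P"
proof -
  obtain k where P: "subgrp P" "P \<subseteq> S" and card_P: "card P = 2 ^ k"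
    and not_dvd: "\<not> (2::nat) ^ Suc k dvd card S"
    using syl unfolding sylow2_subgroup_def by blast
  define r where "r = card (rcosets\<^bsub>grp S\<^esub> P)"
  interpret comm_group "grp S" using comm_group_grp[OF S] .
  have card_S: "card S = 2 ^ k * r"
    using lagrange[OF subgroup_grp[OF P S]] card_P by (simp add: order_def r_def mult.commute)
  have "odd r"
    using not_dvd card_S by (auto simp: mult.assoc)
  then show ?thesis
    using that card_P card_S nsmul_index_mem[OF S P] r_def by blast
qed

lemma sylow2_mem_iff:
  fixes S :: "'a::{ab_group_add,finite} set"
  assumes S: "subgrp S" and syl: "sylow2_subgroup S P" and x: "x \<in> S"
  shows "x \<in> P \<longleftrightarrow> (\<exists>L. nsmul (2 ^ L) x = 0)"
proof
  obtain k r where card_P: "card P = 2 ^ k" and "odd r" and index: "nsmul r x \<in> P"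
    using sylow2_index[OF S syl] x by metis
  have P: "subgrp P" using syl by (simp add: sylow2_subgroup_def)
  show "x \<in> P \<Longrightarrow> \<exists>L. nsmul (2 ^ L) x = 0"
    using nsmul_card_eq_0[OF P] card_P by auto
  assume "\<exists>L. nsmul (2 ^ L) x = 0"
  then obtain L where L: "nsmul (2 ^ L) x = 0" ..
  obtain u v where "r * u = v * 2 ^ L + 1"
    using bezout_odd_pow2[OF \<open>odd r\<close>] .
  then have "nsmul u (nsmul r x) = nsmul (v * 2 ^ L + 1) x"
    by (simp add: nsmul_mult[symmetric] mult.commute[of u])
  also have "\<dots> = x"
    using nsmul_mult_add_eq[OF L, of v 1] by simp
  finally show "x \<in> P" using subgrp_nsmul[OF P index] by metis
qed

lemma sylow2_subgroup_eq_Int: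
  fixes H :: "'a::{ab_group_add,finite} set"
  assumes "subgrp H" "sylow2_subgroup UNIV A2" "sylow2_subgroup H H2"
  shows "H2 = H \<inter> A2"
  using sylow2_mem_iff[OF assms(1,3)] sylow2_mem_iff[OF subgrp_UNIV assms(2)] assms(3)
  by (auto simp: sylow2_subgroup_def)

lemma card_ne_2_if_sylow2_card_ne_2:
  assumes "sylow2_subgroup H H2" "card H2 \<noteq> 2" "finite H"
  shows "card H \<noteq> 2"
proof
  assume card_H: "card H = 2"
  obtain k where "H2 \<subseteq> H" "card H2 = 2 ^ k" "\<not> (2::nat) ^ Suc k dvd card H"
    using assms(1) unfolding sylow2_subgroup_def by blast
  moreover have "card H2 \<le> 2" using card_H \<open>H2 \<subseteq> H\<close> card_mono[OF assms(3)] by metis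
  ultimately have "(2::nat) ^ k < 2 ^ 1" using assms(2) by simp
  then have "k = 0" by (simp only: power_strict_increasing_iff)
  then show False
    using card_H \<open>\<not> 2 ^ Suc k dvd card H\<close> by simp
qed

text \<open>Projection onto the Sylow 2-subgroup \<open>A\<^sub>2\<close>: with \<open>|A| = 2\<^sup>k r\<close>, \<open>r\<close> odd, the multiplier
  \<open>e = r u\<close> with \<open>r u \<equiv> 1 (mod 2\<^sup>k)\<close> maps into \<open>A\<^sub>2\<close>, fixes \<open>A\<^sub>2\<close> and leaves a remainder of
  odd order.\<close>

lemma sylow2_projection:
  fixes A2 :: "'a::{ab_group_add,finite} set"
  assumes syl: "sylow2_subgroup UNIV A2"
  obtains r e where "odd r" "\<And>y. nsmul e y \<in> A2" "\<And>x. x \<in> A2 \<Longrightarrow> nsmul e x = x"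
    "\<And>y :: 'a. nsmul r (y - nsmul e y) = 0"
proof -
  obtain k r where card_A2: "card A2 = 2 ^ k" and card_UNIV: "card (UNIV :: 'a set) = 2 ^ k * r"
    and "odd r" and index: "\<And>x. x \<in> UNIV \<Longrightarrow> nsmul r x \<in> A2"
    by (rule sylow2_index[OF subgrp_UNIV syl]) blast
  have A2: "subgrp A2" using syl by (simp add: sylow2_subgroup_def)
  obtain u v where uv: "r * u = v * 2 ^ k + 1"
    using bezout_odd_pow2[OF \<open>odd r\<close>] .
  have kill_A2: "nsmul (2 ^ k) x = 0" if "x \<in> A2" for x
    using nsmul_card_eq_0[OF A2 that] card_A2 by simp
  have kill_UNIV: "nsmul (2 ^ k * r) y = 0" for y :: 'a
    using nsmul_card_eq_0[OF subgrp_UNIV, of y] card_UNIV by simp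
  show ?thesis
  proof (rule that[where e = "r * u" and r = r])
    show "nsmul (r * u) y \<in> A2" for y
    proof -
      have "nsmul (r * u) y = nsmul u (nsmul r y)"
        by (simp only: mult.commute[of r] nsmul_mult)
      then show ?thesis using subgrp_nsmul[OF A2 index] by simp
    qed
    show "nsmul (r * u) x = x" if "x \<in> A2" for x
    proof -
      have "nsmul (r * u) x = nsmul (v * 2 ^ k + 1) x" by (simp only: uv)
      also have "\<dots> = x" using nsmul_mult_add_eq[OF kill_A2[OF that], of v 1] by simp
      finally show ?thesis .
    qed
    have r_ru: "r * (r * u) = v * (2 ^ k * r) + r"
      unfolding uv by (simp add: algebra_simps)
    have "nsmul r (nsmul (r * u) y) = nsmul r y" for y :: 'a
    proof -
      have "nsmul r (nsmul (r * u) y) = nsmul (v * (2 ^ k * r) + r) y"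
        by (simp only: nsmul_mult[symmetric] r_ru)
      also have "\<dots> = nsmul r y" by (rule nsmul_mult_add_eq[OF kill_UNIV])
      finally show ?thesis .
    qed
    then show "nsmul r (y - nsmul (r * u) y) = 0" for y :: 'a
      by (simp add: nsmul_diff_right)
  qed (use \<open>odd r\<close> in simp)
qed

subsection \<open>Blocks of the subgroup sum graph\<close>

lemma perfect_code_restrict:
  assumes "perfect_code V W C" "B \<subseteq> V" "\<And>x y. x \<in> B \<Longrightarrow> sum_adj V W x y \<Longrightarrow> y \<in> B"
  shows "perfect_code B W (C \<inter> B)"
proof -
  have adj: "sum_adj B W x y \<longleftrightarrow> sum_adj V W x y" if "x \<in> B" for x y
    using assms(2,3) that by (auto simp: sum_adj_def)
  have indep: "\<not> sum_adj B W x y" if "x \<in> C \<inter> B" "y \<in> C \<inter> B" for x y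
    using assms(1) that adj by (auto simp: perfect_code_def)
  have dom: "\<exists>!c. c \<in> C \<inter> B \<and> sum_adj B W v c" if "v \<in> B" "v \<notin> C" for v
  proof -
    have "\<exists>!c. c \<in> C \<and> sum_adj V W v c"
      using assms(1,2) that unfolding perfect_code_def by blast
    then show ?thesis
      using adj[OF \<open>v \<in> B\<close>] assms(3)[OF \<open>v \<in> B\<close>] by blast
  qed
  show ?thesis
    unfolding perfect_code_def using indep dom by blast
qed

lemma perfect_code_glue:
  assumes block_sub: "\<And>x. x \<in> V \<Longrightarrow> B x \<subseteq> V"
    and block_self: "\<And>x. x \<in> V \<Longrightarrow> x \<in> B x"
    and block_eq: "\<And>x y. x \<in> V \<Longrightarrow> y \<in> B x \<Longrightarrow> B y = B x"
    and block_adj: "\<And>x y. sum_adj V W x y \<Longrightarrow> y \<in> B x"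
    and code: "\<And>x. x \<in> V \<Longrightarrow> perfect_code (B x) W (code (B x))"
  shows "perfect_code V W {c \<in> V. c \<in> code (B c)}" (is "perfect_code V W ?C")
proof -
  have adj: "sum_adj (B x) W y z \<longleftrightarrow> sum_adj V W y z" if "x \<in> V" "y \<in> B x" for x y z
    using block_sub[OF that(1)] block_eq[OF that] block_adj[of y z] that
    by (auto simp: sum_adj_def)
  have indep: "\<not> sum_adj V W x y" if "x \<in> ?C" "y \<in> ?C" for x y
  proof
    assume xy: "sum_adj V W x y"
    have x: "x \<in> V" "x \<in> code (B x)" and y: "y \<in> code (B y)" using that by auto
    have "B y = B x" using block_eq[OF x(1) block_adj[OF xy]] .
    moreover have "sum_adj (B x) W x y" using adj[OF x(1) block_self[OF x(1)]] xy by simp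
    ultimately show False
      using code[OF x(1)] x(2) y unfolding perfect_code_def by auto
  qed
  have dom: "\<exists>!c. c \<in> ?C \<and> sum_adj V W v c" if v: "v \<in> V" "v \<notin> ?C" for v
  proof -
    have "c \<in> ?C \<and> sum_adj V W v c \<longleftrightarrow> c \<in> code (B v) \<and> sum_adj (B v) W v c" for c
    proof
      assume c: "c \<in> ?C \<and> sum_adj V W v c"
      then have "B c = B v" using block_eq[OF v(1) block_adj] by blast
      then show "c \<in> code (B v) \<and> sum_adj (B v) W v c"
        using c adj[OF v(1) block_self[OF v(1)]] by auto
    next
      assume c: "c \<in> code (B v) \<and> sum_adj (B v) W v c"
      then have "c \<in> B v" using code[OF v(1)] by (auto simp: perfect_code_def)
      then show "c \<in> ?C \<and> sum_adj V W v c"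
        using c block_eq[OF v(1)] block_sub[OF v(1)] adj[OF v(1) block_self[OF v(1)]] by auto
    qed
    moreover have "v \<in> B v - code (B v)" using v block_self by blast
    ultimately show ?thesis
      using code[OF v(1)] unfolding perfect_code_def by simp
  qed
  show ?thesis
    unfolding perfect_code_def using indep dom by blast
qed

lemma has_perfect_code_if_blocks:
  assumes "\<And>x. x \<in> V \<Longrightarrow> B x \<subseteq> V" "\<And>x. x \<in> V \<Longrightarrow> x \<in> B x"
    "\<And>x y. x \<in> V \<Longrightarrow> y \<in> B x \<Longrightarrow> B y = B x" "\<And>x y. sum_adj V W x y \<Longrightarrow> y \<in> B x"
    and block_code: "\<And>x. x \<in> V \<Longrightarrow> has_perfect_code (B x) W"
  shows "has_perfect_code V W"
proof -
  have "perfect_code (B x) W (SOME C. perfect_code (B x) W C)" if "x \<in> V" for x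
    using block_code[OF that] unfolding has_perfect_code_def by (rule someI_ex)
  then show ?thesis
    using perfect_code_glue[OF assms(1-4), where code = "\<lambda>S. SOME C. perfect_code S W C"]
    unfolding has_perfect_code_def by blast
qed

definition coset :: "'a::ab_group_add set \<Rightarrow> 'a \<Rightarrow> 'a set" where
  "coset W a = (+) a ` W"

definition pm_coset :: "'a::ab_group_add set \<Rightarrow> 'a \<Rightarrow> 'a set" where
  "pm_coset W a = coset W a \<union> coset W (- a)"

lemma mem_coset_iff: "subgrp W \<Longrightarrow> z \<in> coset W a \<longleftrightarrow> z - a \<in> W"
  unfolding coset_def by (auto intro: rev_image_eqI[of "z - a"])

lemma coset_eq:
  assumes W: "subgrp W" and b: "b \<in> coset W a"
  shows "coset W b = coset W a"
proof (rule Set.set_eqI)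
  fix z
  have "z - a = (z - b) + (b - a)" "z - b = (z - a) - (b - a)" by simp_all
  then show "z \<in> coset W b \<longleftrightarrow> z \<in> coset W a"
    using b subgrp_add[OF W] subgrp_diff[OF W] by (metis mem_coset_iff[OF W])
qed

lemma coset_subset: "subgrp V \<Longrightarrow> W \<subseteq> V \<Longrightarrow> a \<in> V \<Longrightarrow> coset W a \<subseteq> V"
  by (auto simp: coset_def subgrp_def)

lemma uminus_mem_coset:
  assumes W: "subgrp W" and x: "x \<in> coset W a"
  shows "- x \<in> coset W (- a)"
proof -
  have "- (x - a) \<in> W" using x subgrp_minus[OF W] mem_coset_iff[OF W] by blast
  moreover have "- (x - a) = - x - (- a)" by simp
  ultimately show ?thesis using mem_coset_iff[OF W] by metis
qed

lemma coset_uminus_eq: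
  assumes W: "subgrp W" and a: "a + a \<in> W"
  shows "coset W (- a) = coset W a"
proof (rule coset_eq[OF W])
  have "- a - a = - (a + a)" by simp
  then show "- a \<in> coset W a" using subgrp_minus[OF W a] mem_coset_iff[OF W] by metis
qed

lemma add_mem_if_mem_coset:
  assumes W: "subgrp W" and a: "a + a \<in> W" and x: "x \<in> coset W a" and y: "y \<in> coset W a"
  shows "x + y \<in> W"
proof -
  have "x - a \<in> W" "y - a \<in> W" using x y by (simp_all add: mem_coset_iff[OF W])
  then have "(x - a) + (y - a) + (a + a) \<in> W" using a by (metis subgrp_add[OF W])
  then show ?thesis by simp
qed

lemma pm_coset_eq:
  assumes W: "subgrp W" and b: "b \<in> pm_coset W a"
  shows "pm_coset W b = pm_coset W a"
proof (cases "b \<in> coset W a")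
  case True
  then have "coset W b = coset W a" "coset W (- b) = coset W (- a)"
    using coset_eq[OF W] uminus_mem_coset[OF W True] by simp_all
  then show ?thesis by (simp add: pm_coset_def)
next
  case False
  with b have "b \<in> coset W (- a)" by (simp add: pm_coset_def)
  then have "coset W b = coset W (- a)" "coset W (- b) = coset W a"
    using coset_eq[OF W] uminus_mem_coset[OF W, of b "- a"] by simp_all
  then show ?thesis by (auto simp: pm_coset_def)
qed

lemma pm_coset_adj:
  assumes W: "subgrp W" and x: "x \<in> pm_coset W a" and adj: "sum_adj V W x y"
  shows "y \<in> pm_coset W a"
proof -
  have "y \<in> coset W (- x)" using adj by (simp add: mem_coset_iff[OF W] sum_adj_def add.commute)
  then have "y \<in> pm_coset W x" by (simp add: pm_coset_def)
  then show ?thesis using pm_coset_eq[OF W x] by simp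
qed

lemma perfect_code_pm_coset_pair:
  assumes W: "subgrp W" and a: "a + a \<notin> W"
  shows "perfect_code (pm_coset W a) W {a, - a}"
proof -
  define B where "B = pm_coset W a"
  have dom: "\<exists>!c. c \<in> {b, - b} \<and> sum_adj B W v c"
    if b: "b \<in> {a, - a}" and v: "v \<in> coset W b" "v \<noteq> b" for b v
  proof -
    have bb: "b + b \<notin> W" using a b by (auto simp: minus_add_distrib[symmetric] dest: subgrp_minus[OF W])
    have "v \<noteq> - b"
      using v(1) bb by (auto simp: mem_coset_iff[OF W] dest: subgrp_minus[OF W])
    moreover have "v \<in> B" "- b \<in> B"
      using b v W by (auto simp: B_def pm_coset_def mem_coset_iff subgrp_zero)
    ultimately have adj: "sum_adj B W v (- b)"
      using v mem_coset_iff[OF W] by (auto simp: sum_adj_def)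
    have "v + b = (v - b) + (b + b)" by (simp add: algebra_simps)
    then have "v + b \<notin> W"
      using v(1) bb W by (metis mem_coset_iff add_diff_cancel_left' subgrp_diff)
    then have "\<not> sum_adj B W v b" by (simp add: sum_adj_def)
    then show ?thesis using adj by blast
  qed
  have self: "a \<in> coset W a" "- a \<in> coset W (- a)"
    using W by (simp_all add: mem_coset_iff subgrp_zero)
  show ?thesis
    unfolding perfect_code_def B_def[symmetric]
  proof (intro conjI ballI)
    show "{a, - a} \<subseteq> B" using self by (simp add: B_def pm_coset_def)
    fix v assume "v \<in> B - {a, - a}"
    then consider "v \<in> coset W a" "v \<noteq> a" | "v \<in> coset W (- a)" "v \<noteq> - a"
      by (auto simp: B_def pm_coset_def)
    then show "\<exists>!c. c \<in> {a, - a} \<and> sum_adj B W v c"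
      using dom[of a v] dom[of "- a" v] by cases (simp_all add: insert_commute)
  qed (auto simp: sum_adj_def)
qed

lemma perfect_code_coset_involution:
  assumes W: "subgrp W" and t: "t + t = 0"
  shows "perfect_code (coset W t) W {t}"
proof -
  have "t \<in> coset W t" using W by (simp add: mem_coset_iff subgrp_zero)
  moreover have "sum_adj (coset W t) W v t" if "v \<in> coset W t" "v \<noteq> t" for v
  proof -
    have "- t = t" using t by (simp add: add_eq_0_iff2)
    then have vt: "v + t = v - t" by (metis diff_conv_add_uminus)
    show ?thesis
      unfolding sum_adj_def vt using that \<open>t \<in> coset W t\<close> by (simp add: mem_coset_iff[OF W])
  qed
  ultimately show ?thesis by (auto simp: perfect_code_def sum_adj_def)
qed

text \<open>Inside a coset \<open>X = a + W\<close> with \<open>2a \<in> W\<close> every sum lies in \<open>W\<close>, so distinct \<open>x, y\<close> are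
  adjacent unless \<open>y = -x\<close>. A code element \<open>c\<close> forces \<open>-c\<close> into the code, and a third element of
  \<open>X\<close> would then be adjacent to both.\<close>

lemma coset_has_involution_if_perfect_code:
  assumes W: "subgrp W" "finite W" "card W \<noteq> 2" and a: "a + a \<in> W"
    and code: "perfect_code (coset W a) W C"
  shows "\<exists>t\<in>coset W a. t + t = 0"
proof (rule ccontr)
  define X where "X = coset W a"
  assume "\<not> ?thesis"
  then have no_inv: "x \<noteq> - x" if "x \<in> X" for x
    using that by (auto simp: X_def eq_neg_iff_add_eq_0)
  have neg: "- x \<in> X" if "x \<in> X" for x
    using uminus_mem_coset[OF W(1) that[unfolded X_def]] coset_uminus_eq[OF W(1) a] by (simp add: X_def)
  have adj: "sum_adj X W x y" if "x \<in> X" "y \<in> X" "x \<noteq> y" "y \<noteq> - x" for x y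
    using that add_mem_if_mem_coset[OF W(1) a] by (auto simp: sum_adj_def X_def add_eq_0_iff2)
  have indep: "\<not> sum_adj X W x y" if "x \<in> C" "y \<in> C" for x y
    using code that by (simp add: perfect_code_def X_def)
  have dom: "\<exists>!c. c \<in> C \<and> sum_adj X W v c" if "v \<in> X" "v \<notin> C" for v
    using code that by (simp add: perfect_code_def X_def)
  have "a \<in> X" using W(1) by (simp add: X_def mem_coset_iff subgrp_zero)
  obtain c where c: "c \<in> C" "c \<in> X"
  proof (cases "a \<in> C")
    case False
    then obtain c where "c \<in> C" "sum_adj X W a c" using dom[OF \<open>a \<in> X\<close>] by blast
    then show ?thesis using that by (simp add: sum_adj_def)
  qed (use \<open>a \<in> X\<close> in blast)
  have neg_c: "- c \<in> C"
  proof (rule ccontr)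
    assume "- c \<notin> C"
    then obtain c' where c': "c' \<in> C" "sum_adj X W (- c) c'" using dom neg[OF c(2)] by blast
    then have "c' \<noteq> c" "c' \<noteq> - c" "c' \<in> X" by (auto simp: sum_adj_def)
    then show False using adj[OF c(2) \<open>c' \<in> X\<close>] indep[OF c(1) c'(1)] by auto
  qed
  have "card X = card W" by (simp add: X_def coset_def card_image)
  moreover have "card {c, - c} = 2" using no_inv[OF c(2)] by simp
  ultimately have "X \<noteq> {c, - c}" using W(3) by auto
  moreover have "{c, - c} \<subseteq> X" using c(2) neg by simp
  ultimately obtain z where z: "z \<in> X" "z \<noteq> c" "z \<noteq> - c" by blast
  have "sum_adj X W z c" "sum_adj X W z (- c)"
    using adj[OF z(1) c(2)] adj[OF z(1) neg[OF c(2)]] z by (auto simp: equation_minus_iff)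
  moreover have "z \<notin> C" using indep[OF _ c(1)] \<open>sum_adj X W z c\<close> by blast
  ultimately show False using dom[OF z(1)] c(1) neg_c no_inv[OF c(2)] by blast
qed

subsection \<open>The perfect code criterion\<close>

definition square_cosets_have_involutions :: "'a::ab_group_add set \<Rightarrow> 'a set \<Rightarrow> bool" where
  "square_cosets_have_involutions V W \<longleftrightarrow>
     (\<forall>a\<in>V. a + a \<in> W \<longrightarrow> (\<exists>h\<in>W. (a + h) + (a + h) = 0))"

lemma has_perfect_code_iff:
  assumes V: "subgrp V" and W: "subgrp W" "finite W" "card W \<noteq> 2" and WV: "W \<subseteq> V"
  shows "has_perfect_code V W \<longleftrightarrow> square_cosets_have_involutions V W"
  unfolding square_cosets_have_involutions_def
proof (intro iffI ballI impI)
  fix a assume "has_perfect_code V W" "a \<in> V" "a + a \<in> W"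
  then obtain C where "perfect_code V W C" by (auto simp: has_perfect_code_def)
  moreover have "coset W a = pm_coset W a"
    using coset_uminus_eq[OF W(1) \<open>a + a \<in> W\<close>] by (simp add: pm_coset_def)
  ultimately have "perfect_code (coset W a) W (C \<inter> coset W a)"
    using perfect_code_restrict coset_subset[OF V WV \<open>a \<in> V\<close>] pm_coset_adj[OF W(1)] by metis
  then obtain t where "t \<in> coset W a" "t + t = 0"
    using coset_has_involution_if_perfect_code[OF W \<open>a + a \<in> W\<close>] by blast
  then show "\<exists>h\<in>W. (a + h) + (a + h) = 0" by (auto simp: coset_def)
next
  assume crit: "\<forall>a\<in>V. a + a \<in> W \<longrightarrow> (\<exists>h\<in>W. (a + h) + (a + h) = 0)"
  have block_code: "has_perfect_code (pm_coset W a) W" if "a \<in> V" for a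
  proof (cases "a + a \<in> W")
    case True
    then obtain h where "h \<in> W" and t: "(a + h) + (a + h) = 0" using crit \<open>a \<in> V\<close> by blast
    then have "a + h \<in> pm_coset W a" by (simp add: pm_coset_def mem_coset_iff[OF W(1)])
    then have "pm_coset W a = pm_coset W (a + h)" using pm_coset_eq[OF W(1)] by simp
    also have "\<dots> = coset W (a + h)"
      using coset_uminus_eq[OF W(1), of "a + h"] t subgrp_zero[OF W(1)] by (simp add: pm_coset_def)
    finally have "perfect_code (pm_coset W a) W {a + h}"
      using perfect_code_coset_involution[OF W(1) t] by simp
    then show ?thesis by (auto simp: has_perfect_code_def)
  next
    case False
    then show ?thesis using perfect_code_pm_coset_pair[OF W(1)] by (auto simp: has_perfect_code_def)
  qed
  have self: "x \<in> pm_coset W x" for x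
    using W(1) by (simp add: pm_coset_def mem_coset_iff subgrp_zero)
  show "has_perfect_code V W"
  proof (rule has_perfect_code_if_blocks[where B = "pm_coset W"])
    show "pm_coset W x \<subseteq> V" if "x \<in> V" for x
      using that coset_subset[OF V WV] subgrp_minus[OF V] by (simp add: pm_coset_def)
    show "x \<in> pm_coset W x" for x by (rule self)
    show "pm_coset W y = pm_coset W x" if "y \<in> pm_coset W x" for x y
      using pm_coset_eq[OF W(1) that] .
    show "y \<in> pm_coset W x" if "sum_adj V W x y" for x y
      using pm_coset_adj[OF W(1) self that] .
  qed (rule block_code)
qed

subsection \<open>Reduction to the Sylow 2-subgroups\<close>

lemma square_cosets_have_involutions_sylow2_iff:
  fixes H A2 H2 :: "'a::{ab_group_add,finite} set"
  assumes H: "subgrp H" and syl_A: "sylow2_subgroup UNIV A2" and syl_H: "sylow2_subgroup H H2"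
  shows "square_cosets_have_involutions A2 H2 \<longleftrightarrow> square_cosets_have_involutions UNIV H"
proof -
  obtain r e where "odd r" and proj: "\<And>y. nsmul e y \<in> A2"
    and fix_A2: "\<And>x. x \<in> A2 \<Longrightarrow> nsmul e x = x" and odd_rest: "\<And>y :: 'a. nsmul r (y - nsmul e y) = 0"
    by (rule sylow2_projection[OF syl_A]) blast
  have H2: "H2 = H \<inter> A2" using sylow2_subgroup_eq_Int[OF H syl_A syl_H] .
  show ?thesis
    unfolding square_cosets_have_involutions_def
  proof (intro iffI ballI impI)
    assume crit2: "\<forall>a\<in>A2. a + a \<in> H2 \<longrightarrow> (\<exists>h\<in>H2. (a + h) + (a + h) = 0)"
    fix a :: 'a assume "a + a \<in> H"
    define a2 where "a2 = nsmul e a"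
    have "a2 \<in> A2" by (simp add: a2_def proj)
    have "a2 + a2 = nsmul e (a + a)" by (simp add: a2_def nsmul_add_right)
    then have "a2 + a2 \<in> H2"
      using proj[of "a + a"] subgrp_nsmul[OF H \<open>a + a \<in> H\<close>, of e] by (simp add: H2)
    then obtain h2 where "h2 \<in> H2" and h2: "(a2 + h2) + (a2 + h2) = 0"
      using crit2 \<open>a2 \<in> A2\<close> by blast
    have "(a - a2) + (a - a2) = (a + a) - (a2 + a2)" by (simp add: algebra_simps)
    also have "\<dots> \<in> H" using \<open>a + a \<in> H\<close> \<open>a2 + a2 \<in> H2\<close> H2 subgrp_diff[OF H] by blast
    finally have "a - a2 \<in> H"
      using subgrp_mem_if_odd_torsion[OF H \<open>odd r\<close> odd_rest[of a]] by (simp add: a2_def)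
    then have "h2 - (a - a2) \<in> H" using \<open>h2 \<in> H2\<close> H2 subgrp_diff[OF H] by blast
    moreover have "a + (h2 - (a - a2)) = a2 + h2" by simp
    ultimately show "\<exists>h\<in>H. (a + h) + (a + h) = 0" using h2 by metis
  next
    assume crit: "\<forall>a\<in>UNIV. a + a \<in> H \<longrightarrow> (\<exists>h\<in>H. (a + h) + (a + h) = 0)"
    fix a assume "a \<in> A2" "a + a \<in> H2"
    then obtain h where "h \<in> H" and h: "(a + h) + (a + h) = 0"
      using crit H2 by blast
    have "nsmul e h \<in> H2" using proj[of h] subgrp_nsmul[OF H \<open>h \<in> H\<close>] by (simp add: H2)
    moreover have "(a + nsmul e h) + (a + nsmul e h) = nsmul e ((a + h) + (a + h))"
      using fix_A2[OF \<open>a \<in> A2\<close>] by (simp add: nsmul_add_right)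
    ultimately show "\<exists>h\<in>H2. (a + h) + (a + h) = 0" using h by (intro bexI) auto
  qed
qed

theorem corollary3p6:
  fixes H A2 H2 :: "'a::{ab_group_add, finite} set"
  assumes "subgrp H"
    and "sylow2_subgroup (UNIV :: 'a set) A2"
    and "sylow2_subgroup H H2"
    and "card H2 \<noteq> 2"
  shows "has_perfect_code A2 H2 \<longleftrightarrow> has_perfect_code (UNIV :: 'a set) H"
proof -
  have A2: "subgrp A2" and H2: "subgrp H2" "H2 \<subseteq> A2"
    using assms sylow2_subgroup_eq_Int[OF assms(1-3)] by (auto simp: sylow2_subgroup_def)
  have "card H \<noteq> 2" using card_ne_2_if_sylow2_card_ne_2[OF assms(3,4)] by simp
  then have "has_perfect_code UNIV H \<longleftrightarrow> square_cosets_have_involutions UNIV H"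
    using has_perfect_code_iff[OF subgrp_UNIV assms(1)] by simp
  moreover have "has_perfect_code A2 H2 \<longleftrightarrow> square_cosets_have_involutions A2 H2"
    using has_perfect_code_iff[OF A2 H2(1) _ assms(4) H2(2)] by simp
  ultimately show ?thesis
    using square_cosets_have_involutions_sylow2_iff[OF assms(1-3)] by simp
qed

end
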